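(* Assume Assumption (I), and let $(L_k,u_k)$ be a sequence generated by Algorithm A. Then $(u_k)$ is bounded in $V$ and $(F'(u_k))$ is bounded in $V^*$.
   Context: Standing assumptions: $\Omega\subset\mathbb R^d$ bounded Lipschitz domain; $V$ real Hilbert space with inner product $\langle\cdot,\cdot\rangle_V$, $V\subset L^2(\Omega)$ with compact and dense embedding; $V^*$ dual. $F:V\to\mathbb R$ weakly lower semicontinuous, bounded below by an affine function, continuously Fréchet differentiable. $\alpha>0$, $\beta>0$, $p\in(0,1)$. Assumption (I): the standing assumptions hold; $F'$ is completely continuous ($u_n\rightharpoonup u$ in $V$ implies $F'(u_n)\to F'(u)$ in $V^*$); and $F':V\to V^*$ is Lipschitz continuous on bounded sets. For $\epsilon>0$, $\psi_\epsilon(t)=\frac p2\frac{t}{\epsilon^{2-p}}+(1-\frac p2)\epsilon^p$ if $t\in[0,\epsilon^2)$, $\psi_\epsilon(t)=t^{p/2}$ if $t\ge\epsilon^2$, $\psi_\epsilon'(t)=\frac p2\min(\epsilon^{p-2},t^{(p-2)/2})$. Algorithm A: choose a monotonically decreasing sequence $\epsilon_k\searrow0$, constants $\gamma>1$, $\tilde L>0$, and $u_0\in V$. Given $u_k$, for $L\ge0$ let problem (Q$_{k,L}$) be $\min_{u\in V} F(u_k)+F'(u_k)(u-u_k)+\frac L2\|u-u_k\|_V^2+\frac\alpha2\|u\|_V^2+\beta\int_\Omega\big[\psi_{\epsilon_k}(u_k^2)+\psi_{\epsilon_k}'(u_k^2)(u^2-u_k^2)\big]dx$ (strongly convex, unique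 minimizer), and let (D$_{k,L}$) be the condition $F(u_{k+1})\le F(u_k)+F'(u_k)(u_{k+1}-u_k)+L\|u_{k+1}-u_k\|_V^2$ for its minimizer $u_{k+1}$. $L_k$ is the smallest $L\in\{0\}\cup\{\tilde L\gamma^l:l\ge0\}$ for which (D$_{k,L}$) holds, and $u_{k+1}$ is the corresponding minimizer; then $k\mapsto k+1$. *)

theory Defs
  imports "HOL-Analysis.Analysis"
begin

definition psi :: "real \<Rightarrow> real \<Rightarrow> real \<Rightarrow> real" where
  "psi p \<epsilon> t = (if t < \<epsilon>\<^sup>2 then p / 2 * t / \<epsilon> powr (2 - p) + (1 - p / 2) * \<epsilon> powr p
                 else t powr (p / 2))"

definition dpsi :: "real \<Rightarrow> real \<Rightarrow> real \<Rightarrow> real" where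
  "dpsi p \<epsilon> t = (if t < \<epsilon>\<^sup>2 then p / 2 * \<epsilon> powr (p - 2) else p / 2 * t powr ((p - 2) / 2))"

definition weak_conv :: "(nat \<Rightarrow> 'v::real_inner) \<Rightarrow> 'v \<Rightarrow> bool" where
  "weak_conv u x \<longleftrightarrow> (\<forall>w. (\<lambda>n. inner (u n) w) \<longlonglongrightarrow> inner x w)"

definition lipschitz_domain :: "'d::euclidean_space set \<Rightarrow> bool" where
  "lipschitz_domain \<Omega> \<longleftrightarrow> open \<Omega> \<and> connected \<Omega> \<and> \<Omega> \<noteq> {} \<and>
     (\<forall>x\<in>frontier \<Omega>. \<exists>r>0. \<exists>e::'d. \<exists>g::'d \<Rightarrow> real. \<exists>M. norm e = 1 \<and>
        (\<forall>y z. y \<bullet> e = 0 \<longrightarrow> z \<bullet> e = 0 \<longrightarrow> \<bar>g y - g z\<bar> \<le> M * norm (y - z)) \<and>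
        \<Omega> \<inter> ball x r = {y \<in> ball x r. y \<bullet> e < g (y - (y \<bullet> e) *\<^sub>R e)})"

definition in_L2 :: "'d::euclidean_space set \<Rightarrow> ('d \<Rightarrow> real) \<Rightarrow> bool" where
  "in_L2 \<Omega> f \<longleftrightarrow> f \<in> borel_measurable (lebesgue_on \<Omega>) \<and> integrable (lebesgue_on \<Omega>) (\<lambda>x. (f x)\<^sup>2)"

definition L2_dist_sq :: "'d::euclidean_space set \<Rightarrow> ('d \<Rightarrow> real) \<Rightarrow> ('d \<Rightarrow> real) \<Rightarrow> real" where
  "L2_dist_sq \<Omega> f g = integral\<^sup>L (lebesgue_on \<Omega>) (\<lambda>x. (f x - g x)\<^sup>2)"

definition compact_dense_embedding :: "'d::euclidean_space set \<Rightarrow> ('v::real_inner \<Rightarrow> 'd \<Rightarrow> real) \<Rightarrow> bool" where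
  "compact_dense_embedding \<Omega> \<iota> \<longleftrightarrow>
     (\<forall>a b u v x. \<iota> (a *\<^sub>R u + b *\<^sub>R v) x = a * \<iota> u x + b * \<iota> v x) \<and>
     (\<forall>u. in_L2 \<Omega> (\<iota> u)) \<and>
     (\<forall>u. (AE x in lebesgue_on \<Omega>. \<iota> u x = 0) \<longrightarrow> u = 0) \<and>
     (\<forall>s::nat \<Rightarrow> 'v. bounded (range s) \<longrightarrow>
        (\<exists>r w. strict_mono r \<and> in_L2 \<Omega> w \<and> (\<lambda>n. L2_dist_sq \<Omega> (\<iota> (s (r n))) w) \<longlonglongrightarrow> 0)) \<and>
     (\<forall>f. in_L2 \<Omega> f \<longrightarrow> (\<forall>\<delta>>0. \<exists>u. L2_dist_sq \<Omega> (\<iota> u) f < \<delta>))"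

definition Qobj :: "'d::euclidean_space set \<Rightarrow> ('v::real_inner \<Rightarrow> 'd \<Rightarrow> real) \<Rightarrow> ('v \<Rightarrow> real) \<Rightarrow>
    ('v \<Rightarrow> 'v \<Rightarrow>\<^sub>L real) \<Rightarrow> real \<Rightarrow> real \<Rightarrow> real \<Rightarrow> real \<Rightarrow> 'v \<Rightarrow> real \<Rightarrow> 'v \<Rightarrow> real" where
  "Qobj \<Omega> \<iota> F F' \<alpha> \<beta> p \<epsilon> uk L u =
     F uk + blinfun_apply (F' uk) (u - uk) + L / 2 * (norm (u - uk))\<^sup>2 + \<alpha> / 2 * (norm u)\<^sup>2
     + \<beta> * integral\<^sup>L (lebesgue_on \<Omega>)
         (\<lambda>x. psi p \<epsilon> ((\<iota> uk x)\<^sup>2) + dpsi p \<epsilon> ((\<iota> uk x)\<^sup>2) * ((\<iota> u x)\<^sup>2 - (\<iota> uk x)\<^sup>2))"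

definition condD :: "('v::real_normed_vector \<Rightarrow> real) \<Rightarrow> ('v \<Rightarrow> 'v \<Rightarrow>\<^sub>L real) \<Rightarrow> 'v \<Rightarrow> real \<Rightarrow> 'v \<Rightarrow> bool" where
  "condD F F' uk L w \<longleftrightarrow> F w \<le> F uk + blinfun_apply (F' uk) (w - uk) + L * (norm (w - uk))\<^sup>2"

definition Lcands :: "real \<Rightarrow> real \<Rightarrow> real set" where
  "Lcands Lt \<gamma> = {0} \<union> {Lt * \<gamma> ^ l | l. True}"

end

theory Submission
  imports Defs
begin

text \<open>Write Phi_eps(v) = F v + alpha/2 |v|^2 + beta \<integral> psi_eps(v^2). As psi_eps is concave,
  the model of (Q_k,L) majorises Phi_eps_k up to L/2 |u - u_k|^2 as soon as (D_k,L) holds, while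
  strong convexity of the model gives a gain of at least (L + alpha)/2 |u_k+1 - u_k|^2 at its
  minimiser. Hence Phi_eps_k(u_k+1) \<le> Phi_eps_k(u_k), and since psi_eps decreases with eps,
  all values Phi_eps_k(u_k) are bounded by Phi_eps_0(u_0). An affine lower bound for F makes
  Phi_eps coercive uniformly in eps, so (u_k) is bounded, and F', being Lipschitz on bounded
  sets, is bounded along it.\<close>

lemma bounded_if_affine_plus_quadratic_le:
  fixes g :: "'a::real_normed_vector \<Rightarrow>\<^sub>L real"
  assumes "\<alpha> > 0" and le: "\<And>x. x \<in> S \<Longrightarrow> blinfun_apply g x + c + \<alpha> / 2 * (norm x)\<^sup>2 \<le> C"
  shows "bounded S"
proof -
  define K where "K = norm g + \<bar>C - c\<bar>"
  have "norm x \<le> max 1 (2 * K / \<alpha>)" if "x \<in> S" for x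
  proof (rule ccontr)
    assume "\<not> ?thesis"
    then have "norm x > 1" "2 * K / \<alpha> < norm x" by auto
    then have r: "norm x > 1" "\<alpha> * norm x > 2 * K" using \<open>\<alpha> > 0\<close> by (auto simp: field_simps)
    have "- (norm g * norm x) \<le> blinfun_apply g x"
      using norm_blinfun[of g x] by (simp add: abs_le_iff)
    then have "\<alpha> / 2 * (norm x)\<^sup>2 \<le> norm g * norm x + \<bar>C - c\<bar> * norm x"
      using le[OF that] r(1) mult_right_mono[of 1 "norm x" "\<bar>C - c\<bar>"] by (simp add: mult.commute)
    also have "\<dots> = K * norm x" unfolding K_def by (simp add: algebra_simps)
    also have "\<dots> < \<alpha> / 2 * (norm x)\<^sup>2"
    proof -
      have "2 * K * norm x < \<alpha> * norm x * norm x" using r by (intro mult_strict_right_mono) auto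
      then show ?thesis by (simp add: power2_eq_square)
    qed
    finally show False by simp
  qed
  then show ?thesis unfolding bounded_iff by blast
qed

lemma bounded_image_if_lipschitz_on:
  assumes "bounded S" and lip: "\<And>x y. x \<in> S \<Longrightarrow> y \<in> S \<Longrightarrow> norm (f x - f y) \<le> K * norm (x - y)"
  shows "bounded (f ` S)"
proof (cases "S = {}")
  case False
  then obtain x0 where "x0 \<in> S" by blast
  obtain B where B: "\<And>x. x \<in> S \<Longrightarrow> norm x \<le> B" using \<open>bounded S\<close> unfolding bounded_iff by blast
  have "norm (f x) \<le> norm (f x0) + \<bar>K\<bar> * (2 * B)" if "x \<in> S" for x
  proof -
    have "norm (f x - f x0) \<le> \<bar>K\<bar> * norm (x - x0)"
      using lip[OF that \<open>x0 \<in> S\<close>] by (smt (verit) mult_right_mono norm_ge_zero)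
    also have "\<dots> \<le> \<bar>K\<bar> * (2 * B)"
      using norm_triangle_ineq4[of x x0] B[OF that] B[OF \<open>x0 \<in> S\<close>] by (intro mult_left_mono) auto
    finally show ?thesis using norm_triangle_ineq2[of "f x" "f x0"] by simp
  qed
  then show ?thesis unfolding bounded_iff by blast
qed simp

definition powr_tangent :: "real \<Rightarrow> real \<Rightarrow> real \<Rightarrow> real" where
  "powr_tangent q x y = x powr q + q * x powr (q - 1) * (y - x)"

lemma powr_tangent_self: "x > 0 \<Longrightarrow> powr_tangent q x x = x powr q"
  by (simp add: powr_tangent_def)

lemma powr_tangent_affine: "powr_tangent q x s + q * x powr (q - 1) * (t - s) = powr_tangent q x t"
  unfolding powr_tangent_def by (simp add: algebra_simps)

lemma powr_le_powr_tangent: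
  assumes q: "0 < q" "q < 1" and x: "x > 0" and y: "y \<ge> 0"
  shows "y powr q \<le> powr_tangent q x y"
proof (cases "y = 0")
  case True
  have "x powr (q - 1) * x = x powr q" using x powr_add[of x "q - 1" 1] by simp
  then have "powr_tangent q x 0 = (1 - q) * x powr q"
    unfolding powr_tangent_def by (simp add: algebra_simps)
  then show ?thesis using True q x by simp
next
  case False
  then have "y > 0" using y by simp
  then have young: "y powr q * x powr (1 - q) \<le> q * y + (1 - q) * x"
    using Youngs_inequality_0[of q "1 - q" y x] q x by simp
  have inv: "x powr (q - 1) * x powr (1 - q) = 1" using x by (simp flip: powr_add)
  have "y powr q = (y powr q * x powr (1 - q)) * x powr (q - 1)"
    using inv by (simp add: algebra_simps)
  also have "\<dots> \<le> (q * y + (1 - q) * x) * x powr (q - 1)"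
    using young by (rule mult_right_mono) simp
  also have "\<dots> = powr_tangent q x y"
    using x powr_add[of x "q - 1" 1] unfolding powr_tangent_def by (simp add: algebra_simps)
  finally show ?thesis .
qed

lemma powr_tangent_mono_base:
  assumes q: "0 < q" "q < 1" and "0 < a" "a \<le> b" "s \<le> a"
  shows "powr_tangent q a s \<le> powr_tangent q b s"
proof -
  have "a powr q \<le> powr_tangent q b a" using powr_le_powr_tangent[OF q, of b a] assms by simp
  moreover have "b powr (q - 1) \<le> a powr (q - 1)" using assms q by (intro powr_mono2') auto
  moreover have "powr_tangent q b s - powr_tangent q a s
      = (powr_tangent q b a - a powr q) + q * (a powr (q - 1) - b powr (q - 1)) * (a - s)"
    unfolding powr_tangent_def by (simp add: algebra_simps)
  ultimately show ?thesis using q assms by (smt (verit) mult_nonneg_nonneg)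
qed

lemma psi_eq_powr_tangent:
  assumes e: "e > 0" and t: "t \<ge> 0"
  shows "psi p e t = powr_tangent (p / 2) (max t (e\<^sup>2)) t"
    and "dpsi p e t = p / 2 * (max t (e\<^sup>2)) powr (p / 2 - 1)"
proof -
  have sq: "e\<^sup>2 = e powr 2" using e by (simp add: powr_numeral)
  have pow: "(e\<^sup>2) powr (p / 2) = e powr p" "(e\<^sup>2) powr (p / 2 - 1) = e powr (p - 2)"
    unfolding sq powr_powr by (simp_all add: algebra_simps)
  have div: "t / e powr (2 - p) = e powr (p - 2) * t" using e by (simp add: powr_diff powr_minus_divide)
  have "e\<^sup>2 * e powr (p - 2) = e powr p" unfolding sq using e powr_add[of e 2 "p - 2"] by simp
  then show "psi p e t = powr_tangent (p / 2) (max t (e\<^sup>2)) t"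
    unfolding psi_def powr_tangent_def using pow div e
    by (auto simp: max_def field_simps)
  show "dpsi p e t = p / 2 * (max t (e\<^sup>2)) powr (p / 2 - 1)"
    unfolding dpsi_def using pow by (auto simp: max_def diff_divide_distrib)
qed

text \<open>Concavity of psi_eps: the right-hand side is the tangent of s \<mapsto> s^(p/2) at max t eps^2,
  which lies above s^(p/2) and above the tangent at eps^2 that defines psi_eps below eps^2.\<close>

lemma psi_le_linearization:
  assumes e: "e > 0" and s: "s \<ge> 0" and t: "t \<ge> 0" and p: "0 < p" "p < 1"
  shows "psi p e s \<le> psi p e t + dpsi p e t * (s - t)"
proof -
  have q: "0 < p / 2" "p / 2 < 1" using p by auto
  have e2: "e\<^sup>2 > 0" using e by simp
  have lin: "psi p e t + dpsi p e t * (s - t) = powr_tangent (p / 2) (max t (e\<^sup>2)) s"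
    unfolding psi_eq_powr_tangent[OF e t] by (rule powr_tangent_affine)
  show ?thesis
  proof (cases "s \<ge> e\<^sup>2")
    case True
    then have "psi p e s = s powr (p / 2)"
      using psi_eq_powr_tangent(1)[OF e s] powr_tangent_self[of s] e2 by (simp add: max_def)
    then show ?thesis
      using lin powr_le_powr_tangent[OF q _ s, of "max t (e\<^sup>2)"] e2 by (simp add: less_max_iff_disj)
  next
    case False
    then have "psi p e s = powr_tangent (p / 2) (e\<^sup>2) s"
      using psi_eq_powr_tangent(1)[OF e s] by (simp add: max_def)
    then show ?thesis
      using lin powr_tangent_mono_base[OF q e2, of "max t (e\<^sup>2)" s] False by simp
  qed
qed

lemma psi_mono_eps:
  assumes e: "0 < e'" "e' \<le> e" and t: "t \<ge> 0" and p: "0 < p" "p < 1"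
  shows "psi p e' t \<le> psi p e t"
proof -
  have "e'\<^sup>2 \<le> e\<^sup>2" using e by (simp add: power_mono)
  then have "max t (e'\<^sup>2) \<le> max t (e\<^sup>2)" by simp
  then show ?thesis
    unfolding psi_eq_powr_tangent(1)[OF e(1) t] psi_eq_powr_tangent(1)[OF order.strict_trans2[OF e] t]
    using e t p
    by (intro powr_tangent_mono_base) (auto simp: less_max_iff_disj)
qed

lemma powr_le_psi:
  assumes e: "e > 0" and t: "t \<ge> 0" and p: "0 < p" "p < 1"
  shows "t powr (p / 2) \<le> psi p e t"
  unfolding psi_eq_powr_tangent(1)[OF e t] using e t p
  by (intro powr_le_powr_tangent) (auto simp: less_max_iff_disj)

lemma psi_nonneg: "e > 0 \<Longrightarrow> t \<ge> 0 \<Longrightarrow> 0 < p \<Longrightarrow> p < 1 \<Longrightarrow> 0 \<le> psi p e t"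
  using powr_le_psi[of e t p] powr_ge_zero[of t "p / 2"] by linarith

lemma psi_le:
  assumes e: "e > 0" and t: "t \<ge> 0" and p: "0 < p" "p < 1"
  shows "psi p e t \<le> 1 + t + e\<^sup>2"
proof -
  define m where "m = max t (e\<^sup>2)"
  have "m > 0" unfolding m_def using e by (simp add: less_max_iff_disj)
  have "psi p e t \<le> m powr (p / 2)"
    unfolding psi_eq_powr_tangent(1)[OF e t] m_def[symmetric] powr_tangent_def using p
    by (simp add: m_def mult_nonneg_nonpos)
  also have "\<dots> \<le> 1 + m"
  proof (cases "m \<le> 1")
    case True
    then show ?thesis using \<open>m > 0\<close> p powr_le1[of "p / 2" m] by simp
  next
    case False
    then have "m powr (p / 2) \<le> m powr 1" using p by (intro powr_mono) auto
    then show ?thesis using \<open>m > 0\<close> by simp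
  qed
  also have "\<dots> \<le> 1 + t + e\<^sup>2" unfolding m_def using t by simp
  finally show ?thesis .
qed

lemma dpsi_bounds:
  assumes e: "e > 0" and t: "t \<ge> 0" and p: "0 < p" "p < 1"
  shows "0 \<le> dpsi p e t" "dpsi p e t \<le> p / 2 * (e\<^sup>2) powr (p / 2 - 1)"
proof -
  show "0 \<le> dpsi p e t" unfolding psi_eq_powr_tangent(2)[OF e t] using p by simp
  have "(max t (e\<^sup>2)) powr (p / 2 - 1) \<le> (e\<^sup>2) powr (p / 2 - 1)"
    using e p by (intro powr_mono2') auto
  then show "dpsi p e t \<le> p / 2 * (e\<^sup>2) powr (p / 2 - 1)"
    unfolding psi_eq_powr_tangent(2)[OF e t] using p by simp
qed

lemma integrable_psi_sq:
  assumes fin: "finite_measure M" and f: "f \<in> borel_measurable M" "integrable M (\<lambda>x. (f x)\<^sup>2)"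
    and e: "e > 0" and p: "0 < p" "p < 1"
  shows "integrable M (\<lambda>x. psi p e ((f x)\<^sup>2))"
proof (rule Bochner_Integration.integrable_bound)
  show "integrable M (\<lambda>x. 1 + (f x)\<^sup>2 + e\<^sup>2)"
    by (intro Bochner_Integration.integrable_add finite_measure.integrable_const[OF fin] f(2))
  show "(\<lambda>x. psi p e ((f x)\<^sup>2)) \<in> borel_measurable M"
    using f(1) unfolding psi_def by measurable
  show "AE x in M. norm (psi p e ((f x)\<^sup>2)) \<le> norm (1 + (f x)\<^sup>2 + e\<^sup>2)"
    using psi_le[OF e _ p] psi_nonneg[OF e _ p] by (intro AE_I2) simp
qed

lemma integrable_dpsi_mult:
  assumes f: "f \<in> borel_measurable M"
    and g: "g \<in> borel_measurable M" "integrable M (\<lambda>x. (g x)\<^sup>2)"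
    and h: "h \<in> borel_measurable M" "integrable M (\<lambda>x. (h x)\<^sup>2)"
    and e: "e > 0" and p: "0 < p" "p < 1"
  shows "integrable M (\<lambda>x. dpsi p e ((f x)\<^sup>2) * (g x * h x))"
proof (rule Bochner_Integration.integrable_bound)
  define C where "C = p / 2 * (e\<^sup>2) powr (p / 2 - 1)"
  show "integrable M (\<lambda>x. C * ((g x)\<^sup>2 + (h x)\<^sup>2))" using g h by simp
  show "(\<lambda>x. dpsi p e ((f x)\<^sup>2) * (g x * h x)) \<in> borel_measurable M"
    using f g h unfolding dpsi_def by measurable
  show "AE x in M. norm (dpsi p e ((f x)\<^sup>2) * (g x * h x)) \<le> norm (C * ((g x)\<^sup>2 + (h x)\<^sup>2))"
  proof (intro AE_I2)
    fix x
    have d: "0 \<le> dpsi p e ((f x)\<^sup>2)" "dpsi p e ((f x)\<^sup>2) \<le> C"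
      using dpsi_bounds[OF e _ p] unfolding C_def by auto
    have "\<bar>g x * h x\<bar> \<le> (g x)\<^sup>2 + (h x)\<^sup>2"
    proof -
      have "2 * (\<bar>g x\<bar> * \<bar>h x\<bar>) \<le> (g x)\<^sup>2 + (h x)\<^sup>2"
        using sum_squares_bound[of "\<bar>g x\<bar>" "\<bar>h x\<bar>"] by (simp add: mult.assoc)
      moreover have "0 \<le> \<bar>g x\<bar> * \<bar>h x\<bar>" by simp
      ultimately have "\<bar>g x\<bar> * \<bar>h x\<bar> \<le> (g x)\<^sup>2 + (h x)\<^sup>2" by linarith
      then show ?thesis by (simp add: abs_mult)
    qed
    then have "dpsi p e ((f x)\<^sup>2) * \<bar>g x * h x\<bar> \<le> C * ((g x)\<^sup>2 + (h x)\<^sup>2)"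
      using d by (intro mult_mono) auto
    then show "norm (dpsi p e ((f x)\<^sup>2) * (g x * h x)) \<le> norm (C * ((g x)\<^sup>2 + (h x)\<^sup>2))"
      using d by (simp add: abs_mult)
  qed
qed

lemma quadratic_nonneg_imp_linear_coeff_zero:
  fixes a b :: real
  assumes nonneg: "\<And>t. 0 \<le> t * a + t\<^sup>2 * b"
  shows "a = 0"
proof (rule ccontr)
  assume "a \<noteq> 0"
  define k where "k = \<bar>b\<bar> + 1"
  have k: "k > 0" "b < k" unfolding k_def by auto
  have "a\<^sup>2 * b < a\<^sup>2 * k" using k \<open>a \<noteq> 0\<close> by (intro mult_strict_left_mono) auto
  then have "a\<^sup>2 * b / k\<^sup>2 < a\<^sup>2 / k" using k by (simp add: power2_eq_square field_simps)
  moreover have "0 \<le> - a\<^sup>2 / k + a\<^sup>2 * b / k\<^sup>2"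
    using nonneg[of "- a / k"] by (simp add: power2_eq_square power_divide)
  ultimately show False by linarith
qed

definition linearized_penalty ::
    "'d::euclidean_space set \<Rightarrow> ('v \<Rightarrow> 'd \<Rightarrow> real) \<Rightarrow> real \<Rightarrow> real \<Rightarrow> 'v \<Rightarrow> 'v \<Rightarrow> real" where
  "linearized_penalty \<Omega> \<iota> p e uk u = integral\<^sup>L (lebesgue_on \<Omega>)
     (\<lambda>x. psi p e ((\<iota> uk x)\<^sup>2) + dpsi p e ((\<iota> uk x)\<^sup>2) * ((\<iota> u x)\<^sup>2 - (\<iota> uk x)\<^sup>2))"

definition smoothed_energy :: "'d::euclidean_space set \<Rightarrow> ('v::real_normed_vector \<Rightarrow> 'd \<Rightarrow> real) \<Rightarrow>
    ('v \<Rightarrow> real) \<Rightarrow> real \<Rightarrow> real \<Rightarrow> real \<Rightarrow> real \<Rightarrow> 'v \<Rightarrow> real" where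
  "smoothed_energy \<Omega> \<iota> F \<alpha> \<beta> p e v =
     F v + \<alpha> / 2 * (norm v)\<^sup>2 + \<beta> * integral\<^sup>L (lebesgue_on \<Omega>) (\<lambda>x. psi p e ((\<iota> v x)\<^sup>2))"

lemma Qobj_eq_linearized_penalty:
  "Qobj \<Omega> \<iota> F F' \<alpha> \<beta> p e uk L u = F uk + blinfun_apply (F' uk) (u - uk)
     + L / 2 * (norm (u - uk))\<^sup>2 + \<alpha> / 2 * (norm u)\<^sup>2 + \<beta> * linearized_penalty \<Omega> \<iota> p e uk u"
  unfolding Qobj_def linearized_penalty_def ..

lemma Qobj_at_center: "Qobj \<Omega> \<iota> F F' \<alpha> \<beta> p e uk L uk = smoothed_energy \<Omega> \<iota> F \<alpha> \<beta> p e uk"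
  unfolding Qobj_def smoothed_energy_def by simp

lemma smoothed_energy_ge:
  assumes "e > 0" "0 < p" "p < 1" "\<beta> \<ge> 0"
  shows "F v + \<alpha> / 2 * (norm v)\<^sup>2 \<le> smoothed_energy \<Omega> \<iota> F \<alpha> \<beta> p e v"
proof -
  have "0 \<le> integral\<^sup>L (lebesgue_on \<Omega>) (\<lambda>x. psi p e ((\<iota> v x)\<^sup>2))"
    using psi_nonneg assms by (intro integral_nonneg_AE AE_I2) simp
  then show ?thesis unfolding smoothed_energy_def using \<open>\<beta> \<ge> 0\<close> by simp
qed

locale L2_embedding =
  fixes \<Omega> :: "'d::euclidean_space set" and \<iota> :: "'v::real_inner \<Rightarrow> 'd \<Rightarrow> real"
  assumes finite_measure: "finite_measure (lebesgue_on \<Omega>)"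
    and linear: "\<iota> (a *\<^sub>R u + b *\<^sub>R v) x = a * \<iota> u x + b * \<iota> v x"
    and in_L2: "in_L2 \<Omega> (\<iota> u)"
begin

lemma borel_measurable [measurable]: "\<iota> u \<in> borel_measurable (lebesgue_on \<Omega>)"
  and integrable_sq: "integrable (lebesgue_on \<Omega>) (\<lambda>x. (\<iota> u x)\<^sup>2)"
  using in_L2 unfolding in_L2_def by auto

lemma integrable_psi:
  "e > 0 \<Longrightarrow> 0 < p \<Longrightarrow> p < 1 \<Longrightarrow> integrable (lebesgue_on \<Omega>) (\<lambda>x. psi p e ((\<iota> u x)\<^sup>2))"
  by (rule integrable_psi_sq[OF finite_measure borel_measurable integrable_sq])

lemma integrable_dpsi:
  "e > 0 \<Longrightarrow> 0 < p \<Longrightarrow> p < 1 \<Longrightarrow>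
    integrable (lebesgue_on \<Omega>) (\<lambda>x. dpsi p e ((\<iota> w x)\<^sup>2) * (\<iota> u x * \<iota> v x))"
  by (rule integrable_dpsi_mult[OF borel_measurable borel_measurable integrable_sq
        borel_measurable integrable_sq])

lemma linearized_penalty_along_line:
  assumes e: "e > 0" and p: "0 < p" "p < 1"
  shows "\<exists>A. \<forall>t. linearized_penalty \<Omega> \<iota> p e uk (w + t *\<^sub>R d) = linearized_penalty \<Omega> \<iota> p e uk w
    + t * A + t\<^sup>2 * integral\<^sup>L (lebesgue_on \<Omega>) (\<lambda>x. dpsi p e ((\<iota> uk x)\<^sup>2) * (\<iota> d x * \<iota> d x))"
proof -
  define dp where "dp x = dpsi p e ((\<iota> uk x)\<^sup>2)" for x
  define lin where "lin x = psi p e ((\<iota> uk x)\<^sup>2) + dp x * ((\<iota> w x)\<^sup>2 - (\<iota> uk x)\<^sup>2)" for x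
  have int: "integrable (lebesgue_on \<Omega>) (\<lambda>x. dp x * (\<iota> u x * \<iota> v x))" for u v
    unfolding dp_def by (rule integrable_dpsi[OF e p])
  have "integrable (lebesgue_on \<Omega>) lin"
    using integrable_psi[OF e p] int[of w w] int[of uk uk]
    unfolding lin_def by (simp add: power2_eq_square right_diff_distrib)
  moreover have "\<iota> (w + t *\<^sub>R d) x = \<iota> w x + t * \<iota> d x" for t x
    using linear[of 1 w t d x] by simp
  then have "psi p e ((\<iota> uk x)\<^sup>2) + dp x * ((\<iota> (w + t *\<^sub>R d) x)\<^sup>2 - (\<iota> uk x)\<^sup>2)
      = lin x + t * (2 * (dp x * (\<iota> w x * \<iota> d x))) + t\<^sup>2 * (dp x * (\<iota> d x * \<iota> d x))" for t x
    unfolding lin_def by (simp add: power2_eq_square algebra_simps)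
  ultimately show ?thesis
    using int[of w d] int[of d d] unfolding linearized_penalty_def lin_def[symmetric] dp_def[symmetric]
    by (intro exI[of _ "2 * integral\<^sup>L (lebesgue_on \<Omega>) (\<lambda>x. dp x * (\<iota> w x * \<iota> d x))"]) simp
qed

lemma Qobj_along_line:
  assumes e: "e > 0" and p: "0 < p" "p < 1"
  shows "\<exists>A J. 0 \<le> J \<and> (\<forall>t. Qobj \<Omega> \<iota> F F' \<alpha> \<beta> p e uk L (w + t *\<^sub>R d)
    = Qobj \<Omega> \<iota> F F' \<alpha> \<beta> p e uk L w + t * A + t\<^sup>2 * ((L + \<alpha>) / 2 * (norm d)\<^sup>2 + \<beta> * J))"
proof -
  define J where "J = integral\<^sup>L (lebesgue_on \<Omega>) (\<lambda>x. dpsi p e ((\<iota> uk x)\<^sup>2) * (\<iota> d x * \<iota> d x))"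
  obtain A where A: "\<And>t. linearized_penalty \<Omega> \<iota> p e uk (w + t *\<^sub>R d)
      = linearized_penalty \<Omega> \<iota> p e uk w + t * A + t\<^sup>2 * J"
    using linearized_penalty_along_line[OF e p] unfolding J_def by blast
  have "0 \<le> J" unfolding J_def using dpsi_bounds(1)[OF e _ p]
    by (intro integral_nonneg_AE AE_I2) simp
  have sq: "(norm (x + t *\<^sub>R d))\<^sup>2 = (norm x)\<^sup>2 + 2 * t * inner x d + t\<^sup>2 * (norm d)\<^sup>2" for x t
    unfolding power2_norm_eq_inner
    by (simp add: inner_add_left inner_add_right inner_commute power2_eq_square algebra_simps)
  have "w + t *\<^sub>R d - uk = (w - uk) + t *\<^sub>R d" for t by simp
  then have shift_norm: "(norm (w + t *\<^sub>R d - uk))\<^sup>2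
      = (norm (w - uk))\<^sup>2 + 2 * t * inner (w - uk) d + t\<^sup>2 * (norm d)\<^sup>2"
    and shift_deriv: "blinfun_apply (F' uk) (w + t *\<^sub>R d - uk)
      = blinfun_apply (F' uk) (w - uk) + t * blinfun_apply (F' uk) d" for t
    by (simp_all only: sq blinfun.add_right blinfun.scaleR_right) simp
  have "Qobj \<Omega> \<iota> F F' \<alpha> \<beta> p e uk L (w + t *\<^sub>R d) = Qobj \<Omega> \<iota> F F' \<alpha> \<beta> p e uk L w
      + t * (blinfun_apply (F' uk) d + L * inner (w - uk) d + \<alpha> * inner w d + \<beta> * A)
      + t\<^sup>2 * ((L + \<alpha>) / 2 * (norm d)\<^sup>2 + \<beta> * J)" for t
    unfolding Qobj_eq_linearized_penalty A sq shift_norm shift_deriv by (simp add: algebra_simps)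
  with \<open>0 \<le> J\<close> show ?thesis by blast
qed

lemma Qobj_minimiser_gap:
  assumes e: "e > 0" and p: "0 < p" "p < 1" and "\<beta> \<ge> 0"
    and min: "\<And>v. Qobj \<Omega> \<iota> F F' \<alpha> \<beta> p e uk L w \<le> Qobj \<Omega> \<iota> F F' \<alpha> \<beta> p e uk L v"
  shows "Qobj \<Omega> \<iota> F F' \<alpha> \<beta> p e uk L w + (L + \<alpha>) / 2 * (norm (v - w))\<^sup>2
    \<le> Qobj \<Omega> \<iota> F F' \<alpha> \<beta> p e uk L v"
proof -
  let ?Q = "Qobj \<Omega> \<iota> F F' \<alpha> \<beta> p e uk L"
  obtain A J where "0 \<le> J" and line: "\<And>t. ?Q (w + t *\<^sub>R (v - w))
      = ?Q w + t * A + t\<^sup>2 * ((L + \<alpha>) / 2 * (norm (v - w))\<^sup>2 + \<beta> * J)"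
    using Qobj_along_line[OF e p] by blast
  have "A = 0"
    using min[of "w + _ *\<^sub>R (v - w)"] by (intro quadratic_nonneg_imp_linear_coeff_zero) (simp add: line)
  then show ?thesis using line[of 1] \<open>0 \<le> J\<close> \<open>\<beta> \<ge> 0\<close> by simp
qed

lemma smoothed_energy_le_Qobj:
  assumes e: "e > 0" and p: "0 < p" "p < 1" and "\<beta> \<ge> 0" and D: "condD F F' uk L w"
  shows "smoothed_energy \<Omega> \<iota> F \<alpha> \<beta> p e w
    \<le> Qobj \<Omega> \<iota> F F' \<alpha> \<beta> p e uk L w + L / 2 * (norm (w - uk))\<^sup>2"
proof -
  have "integral\<^sup>L (lebesgue_on \<Omega>) (\<lambda>x. psi p e ((\<iota> w x)\<^sup>2)) \<le> linearized_penalty \<Omega> \<iota> p e uk w"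
    unfolding linearized_penalty_def
    using integrable_psi[OF e p] integrable_dpsi[OF e p, of uk w w] integrable_dpsi[OF e p, of uk uk uk]
    by (intro integral_mono psi_le_linearization[OF e _ _ p])
      (auto simp: power2_eq_square right_diff_distrib)
  then have "\<beta> * integral\<^sup>L (lebesgue_on \<Omega>) (\<lambda>x. psi p e ((\<iota> w x)\<^sup>2))
      \<le> \<beta> * linearized_penalty \<Omega> \<iota> p e uk w"
    using \<open>\<beta> \<ge> 0\<close> by (rule mult_left_mono)
  then show ?thesis
    using D unfolding smoothed_energy_def Qobj_eq_linearized_penalty condD_def by linarith
qed

lemma smoothed_energy_descent:
  assumes e: "e > 0" and p: "0 < p" "p < 1" and "\<alpha> \<ge> 0" "\<beta> \<ge> 0"
    and min: "\<And>v. Qobj \<Omega> \<iota> F F' \<alpha> \<beta> p e uk L w \<le> Qobj \<Omega> \<iota> F F' \<alpha> \<beta> p e uk L v"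
    and D: "condD F F' uk L w"
  shows "smoothed_energy \<Omega> \<iota> F \<alpha> \<beta> p e w \<le> smoothed_energy \<Omega> \<iota> F \<alpha> \<beta> p e uk"
proof -
  have "norm (w - uk) = norm (uk - w)" by (rule norm_minus_commute)
  then have "L / 2 * (norm (w - uk))\<^sup>2 \<le> (L + \<alpha>) / 2 * (norm (uk - w))\<^sup>2"
    using \<open>\<alpha> \<ge> 0\<close> by (simp add: field_simps)
  then show ?thesis
    using smoothed_energy_le_Qobj[OF e p \<open>\<beta> \<ge> 0\<close> D, where \<alpha> = \<alpha>] Qobj_minimiser_gap[OF e p \<open>\<beta> \<ge> 0\<close> min, of uk]
    unfolding Qobj_at_center by linarith
qed

lemma smoothed_energy_mono_eps:
  assumes "0 < e'" "e' \<le> e" and p: "0 < p" "p < 1" and "\<beta> \<ge> 0"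
  shows "smoothed_energy \<Omega> \<iota> F \<alpha> \<beta> p e' v \<le> smoothed_energy \<Omega> \<iota> F \<alpha> \<beta> p e v"
proof -
  have "e > 0" using assms by simp
  have "integral\<^sup>L (lebesgue_on \<Omega>) (\<lambda>x. psi p e' ((\<iota> v x)\<^sup>2))
      \<le> integral\<^sup>L (lebesgue_on \<Omega>) (\<lambda>x. psi p e ((\<iota> v x)\<^sup>2))"
    using integrable_psi[OF \<open>0 < e'\<close> p] integrable_psi[OF \<open>e > 0\<close> p] psi_mono_eps[OF assms(1,2) _ p]
    by (intro integral_mono) auto
  then show ?thesis unfolding smoothed_energy_def using \<open>\<beta> \<ge> 0\<close> by (simp add: mult_left_mono)
qed

end

lemma L2_embedding_if_compact_dense_embedding:
  assumes "lipschitz_domain \<Omega>" "bounded \<Omega>" and "compact_dense_embedding \<Omega> \<iota>"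
  shows "L2_embedding \<Omega> \<iota>"
proof -
  have "open \<Omega>" using assms(1) unfolding lipschitz_domain_def by simp
  then have "finite_measure (lebesgue_on \<Omega>)"
    using assms(2) by (intro finite_measure_lebesgue_on bounded_set_imp_lmeasurable) auto
  moreover have "\<forall>a b u v x. \<iota> (a *\<^sub>R u + b *\<^sub>R v) x = a * \<iota> u x + b * \<iota> v x \<and> in_L2 \<Omega> (\<iota> u)"
    using assms(3) unfolding compact_dense_embedding_def by simp
  ultimately show ?thesis unfolding L2_embedding_def by simp
qed

theorem lemma7p4:
  fixes \<Omega> :: "'d::euclidean_space set"
    and \<iota> :: "'v::{real_inner, complete_space} \<Rightarrow> 'd \<Rightarrow> real"
    and F :: "'v \<Rightarrow> real"
    and F' :: "'v \<Rightarrow> ('v \<Rightarrow>\<^sub>L real)"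
    and \<alpha> \<beta> p \<gamma> Lt :: real
    and \<epsilon> :: "nat \<Rightarrow> real"
    and u :: "nat \<Rightarrow> 'v"
    and L :: "nat \<Rightarrow> real"
  assumes dom: "lipschitz_domain \<Omega>" "bounded \<Omega>"
    and emb: "compact_dense_embedding \<Omega> \<iota>"
    and F_wlsc: "\<forall>s x. weak_conv s x \<longrightarrow> ereal (F x) \<le> liminf (\<lambda>n. ereal (F (s n)))"
    and F_affine_lb: "\<exists>g::'v \<Rightarrow>\<^sub>L real. \<exists>c. \<forall>v. blinfun_apply g v + c \<le> F v"
    and F_deriv: "\<forall>v. (F has_derivative blinfun_apply (F' v)) (at v)"
    and F'_cont: "continuous_on UNIV F'"
    and F'_compl_cont: "\<forall>s x. weak_conv s x \<longrightarrow> (\<lambda>n. F' (s n)) \<longlonglongrightarrow> F' x"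
    and F'_lip: "\<forall>B. bounded B \<longrightarrow> (\<exists>K. \<forall>x\<in>B. \<forall>y\<in>B. norm (F' x - F' y) \<le> K * norm (x - y))"
    and params: "\<alpha> > 0" "\<beta> > 0" "0 < p" "p < 1"
    and eps: "\<forall>k. \<epsilon> k > 0" "decseq \<epsilon>" "\<epsilon> \<longlonglongrightarrow> 0"
    and gam: "\<gamma> > 1" and Lt: "Lt > 0"
    and Lk_cand: "\<forall>k. L k \<in> Lcands Lt \<gamma>"
    and step_min: "\<forall>k. \<forall>v. Qobj \<Omega> \<iota> F F' \<alpha> \<beta> p (\<epsilon> k) (u k) (L k) (u (Suc k))
                          \<le> Qobj \<Omega> \<iota> F F' \<alpha> \<beta> p (\<epsilon> k) (u k) (L k) v"
    and step_D: "\<forall>k. condD F F' (u k) (L k) (u (Suc k))"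
    and step_smallest: "\<forall>k. \<forall>L'\<in>Lcands Lt \<gamma>. L' < L k \<longrightarrow>
           (\<forall>w. (\<forall>v. Qobj \<Omega> \<iota> F F' \<alpha> \<beta> p (\<epsilon> k) (u k) L' w \<le> Qobj \<Omega> \<iota> F F' \<alpha> \<beta> p (\<epsilon> k) (u k) L' v)
                \<longrightarrow> \<not> condD F F' (u k) L' w)"
  shows "bounded (range u) \<and> bounded (range (\<lambda>k. F' (u k)))"
proof -
  interpret L2_embedding \<Omega> \<iota> using dom emb by (rule L2_embedding_if_compact_dense_embedding)
  have "\<alpha> \<ge> 0" "\<beta> \<ge> 0" using params by auto
  define E where "E k = smoothed_energy \<Omega> \<iota> F \<alpha> \<beta> p (\<epsilon> k) (u k)" for k
  have "E (Suc k) \<le> E k" for k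
  proof -
    have "\<epsilon> (Suc k) \<le> \<epsilon> k" using eps(2) by (simp add: decseq_Suc_iff)
    then have "E (Suc k) \<le> smoothed_energy \<Omega> \<iota> F \<alpha> \<beta> p (\<epsilon> k) (u (Suc k))"
      unfolding E_def by (rule smoothed_energy_mono_eps[OF eps(1)[rule_format] _ params(3,4) \<open>\<beta> \<ge> 0\<close>])
    also have "\<dots> \<le> E k"
      unfolding E_def using step_min step_D
      by (intro smoothed_energy_descent[OF eps(1)[rule_format] params(3,4) \<open>\<alpha> \<ge> 0\<close> \<open>\<beta> \<ge> 0\<close>]) blast+
    finally show ?thesis .
  qed
  then have "decseq E" by (rule decseq_SucI)
  obtain g :: "'v \<Rightarrow>\<^sub>L real" and c where affine_lb: "\<And>v. blinfun_apply g v + c \<le> F v"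
    using F_affine_lb by blast
  have "blinfun_apply g (u k) + c + \<alpha> / 2 * (norm (u k))\<^sup>2 \<le> E k" for k
    using affine_lb[of "u k"] smoothed_energy_ge[OF eps(1)[rule_format] params(3,4) \<open>\<beta> \<ge> 0\<close>]
    unfolding E_def by (smt (verit))
  also have "E k \<le> E 0" for k using \<open>decseq E\<close> by (simp add: decseqD)
  finally have "blinfun_apply g v + c + \<alpha> / 2 * (norm v)\<^sup>2 \<le> E 0" if "v \<in> range u" for v
    using that by blast
  then have "bounded (range u)" using params(1) by (intro bounded_if_affine_plus_quadratic_le) auto
  moreover obtain K where "\<forall>x\<in>range u. \<forall>y\<in>range u. norm (F' x - F' y) \<le> K * norm (x - y)"
    using F'_lip calculation by blast
  then have "bounded (F' ` range u)"
    using \<open>bounded (range u)\<close> by (intro bounded_image_if_lipschitz_on) auto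
  ultimately show ?thesis by (simp add: image_image)
qed

end
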